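(* Let $s\in(0,d]$ and $\theta\in(0,1)$. If $X\subseteq\mathbb{R}^d$ is bounded, then \[ \overline{\dim}_{\mathrm{B}}^{s}X\ \geq\ \overline{\dim}_{\mathrm{B}}X-\max\big\{0,\ \overline{\dim}_{\mathrm{A}}^\theta X-s,\ (\dim_{\mathrm{A}}X-s)(1-\theta)\big\}. \]
   Context: For non-empty bounded $E\subseteq\mathbb{R}^d$ and $r>0$, $N_r(E)$ is the minimal number of sets of diameter $r$ needed to cover $E$, and $\overline{\dim}_{\mathrm{B}}E=\limsup_{r\to0}\frac{\log N_r(E)}{-\log r}$. The Assouad dimension $\dim_{\mathrm{A}}X$ is the infimum of $\alpha>0$ for which there is $C>0$ with $N_r(B(x,R)\cap X)\leq C(R/r)^\alpha$ for all $0<r<R$ and $x\in X$; the upper Assouad spectrum $\overline{\dim}_{\mathrm{A}}^{\theta}X$ is the infimum of $\alpha$ for which there is $C>0$ with $N_r(B(x,R)\cap X)\leq C(R/r)^\alpha$ for all $0<r\leq R^{1/\theta}<R<1$ and $x\in X$. Box dimension profiles: for $s\in[0,d]$ and $r>0$ let $\phi_r^s(x)=\min\{1,(r/|x|)^s\}$ for $x\in\mathbb{R}^d$. For non-empty compact $X$, the capacity $C_r^s(X)$ is defined by $1/C_r^s(X)=\inf_{\mu}\iint\phi_r^s(x-y)\,d\mu(x)\,d\mu(y)$, the infimum over Borel probability measures $\mu$ supported on $X$; for bounded $X$ the capacity is that of its closure. The upper box dimension profile is $\overline{\dim}_{\mathrm{B}}^sX=\limsup_{r\to0}\frac{\log C_r^s(X)}{-\log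 r}$. *)

theory Defs
  imports "HOL-Analysis.Analysis" "HOL-Probability.Probability"
begin

definition covnum :: "real \<Rightarrow> ('a::metric_space) set \<Rightarrow> nat" where
  "covnum r E = (LEAST n. \<exists>C. finite C \<and> card C = n \<and> E \<subseteq> \<Union>C \<and> (\<forall>A\<in>C. diameter A \<le> r))"

definition upper_box_dim :: "('a::metric_space) set \<Rightarrow> ereal" where
  "upper_box_dim E = Limsup (at_right 0) (\<lambda>r. ereal (ln (real (covnum r E)) / - ln r))"

definition assouad_dim :: "('a::metric_space) set \<Rightarrow> ereal" where
  "assouad_dim X = Inf (ereal ` {\<alpha>. \<alpha> > 0 \<and> (\<exists>C>0. \<forall>x\<in>X. \<forall>r R. 0 < r \<and> r < R \<longrightarrow>
      real (covnum r (ball x R \<inter> X)) \<le> C * (R / r) powr \<alpha>)})"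

definition upper_assouad_spectrum :: "real \<Rightarrow> ('a::metric_space) set \<Rightarrow> ereal" where
  "upper_assouad_spectrum \<theta> X = Inf (ereal ` {\<alpha>. \<alpha> > 0 \<and> (\<exists>C>0. \<forall>x\<in>X. \<forall>r R.
      0 < r \<and> r \<le> R powr (1 / \<theta>) \<and> R powr (1 / \<theta>) < R \<and> R < 1 \<longrightarrow>
      real (covnum r (ball x R \<inter> X)) \<le> C * (R / r) powr \<alpha>)})"

definition phi_kernel :: "real \<Rightarrow> real \<Rightarrow> ('a::real_normed_vector) \<Rightarrow> real" where
  "phi_kernel s r x = (if x = 0 then 1 else min 1 ((r / norm x) powr s))"

definition min_energy :: "real \<Rightarrow> real \<Rightarrow> ('a::euclidean_space) set \<Rightarrow> ennreal" where
  "min_energy s r X = Inf {(\<integral>\<^sup>+ x. (\<integral>\<^sup>+ y. ennreal (phi_kernel s r (x - y)) \<partial>\<mu>) \<partial>\<mu>) | \<mu>.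
      sets \<mu> = sets borel \<and> prob_space \<mu> \<and> emeasure \<mu> (UNIV - closure X) = 0}"

definition capacity :: "real \<Rightarrow> real \<Rightarrow> ('a::euclidean_space) set \<Rightarrow> real" where
  "capacity s r X = 1 / enn2real (min_energy s r X)"

definition upper_box_dim_profile :: "real \<Rightarrow> ('a::euclidean_space) set \<Rightarrow> ereal" where
  "upper_box_dim_profile s X = Limsup (at_right 0) (\<lambda>r. ereal (ln (capacity s r X) / - ln r))"

end

theory Submission
  imports Defs
begin

text \<open>
  Let S be a maximal r/2-separated subset of X, so that S has at least N_r(X) points, and test the
  capacity with the uniform measure on S: the capacity is at least the square of the size of S
  divided by the double sum of the kernel over S. Splitting the kernel dyadically, the row of a
  point i is at most a constant times the sum over k of 2^(-ks) times the number of points of S in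
  the ball around i of radius R = 2^k r. Scales with (r/2)^theta <= R < 1 are controlled by the
  upper Assouad spectrum with an exponent a1 > s, the smaller ones by the Assouad dimension with an
  exponent a2 > s, and the scales R >= 1 by the size of S, which the spectrum at the fixed scale 3/4
  bounds by a multiple of r^(-a1). The resulting geometric series make each row O(r^(-M)) with
  M = max (a1 - s) ((a2 - s)(1 - theta)), so the capacity is at least a constant times N_r(X) r^M,
  and taking logarithms gives the theorem as a1 and a2 approach the two dimensions.
\<close>

section \<open>Separated sets and covering numbers\<close>

definition separated :: "real \<Rightarrow> 'a::metric_space set \<Rightarrow> bool" where
  "separated d S \<longleftrightarrow> (\<forall>x\<in>S. \<forall>y\<in>S. x \<noteq> y \<longrightarrow> d < dist x y)"

lemma separated_subset: "separated d S \<Longrightarrow> T \<subseteq> S \<Longrightarrow> separated d T"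
  by (auto simp: separated_def)

lemma covnum_le_card:
  assumes "finite C" "E \<subseteq> \<Union>C" "\<forall>A\<in>C. diameter A \<le> r"
  shows "covnum r E \<le> card C"
  unfolding covnum_def by (rule Least_le) (use assms in blast)

lemma separated_card_volume_bound:
  fixes S :: "'a::euclidean_space set"
  assumes "finite S" "S \<subseteq> cball c \<rho>" "0 < d" "0 \<le> \<rho>" "separated d S"
  shows "real (card S) * (d/2)^DIM('a) \<le> (\<rho> + d/2)^DIM('a)"
proof -
  let ?V = "unit_ball_vol (real DIM('a))"
  have disj: "disjoint_family_on (\<lambda>x. ball x (d/2)) S"
    unfolding disjoint_family_on_def
  proof (intro ballI impI, rule ccontr)
    fix x y assume xy: "x \<in> S" "y \<in> S" "x \<noteq> y" "ball x (d/2) \<inter> ball y (d/2) \<noteq> {}"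
    then obtain z where "dist x z < d/2" "dist y z < d/2" by auto
    then have "dist x y < d" by (metis dist_commute dist_triangle_half_r)
    moreover have "d < dist x y" using assms(5) xy(1-3) unfolding separated_def by blast
    ultimately show False by linarith
  qed
  have sub: "(\<Union>x\<in>S. ball x (d/2)) \<subseteq> ball c (\<rho> + d/2)"
  proof
    fix z assume "z \<in> (\<Union>x\<in>S. ball x (d/2))"
    then obtain x where "x \<in> S" "dist x z < d/2" by auto
    moreover have "dist c x \<le> \<rho>" using assms(2) \<open>x \<in> S\<close> by auto
    ultimately show "z \<in> ball c (\<rho> + d/2)" using dist_triangle[of c z x] by auto
  qed
  have "(\<Sum>x\<in>S. emeasure lborel (ball x (d/2))) = emeasure lborel (\<Union>x\<in>S. ball x (d/2))"
    by (rule sum_emeasure) (use disj assms in auto)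
  also have "\<dots> \<le> emeasure lborel (ball c (\<rho> + d/2))"
    using sub by (intro emeasure_mono) auto
  finally have "ennreal (real (card S) * (?V * (d/2)^DIM('a))) \<le> ennreal (?V * (\<rho> + d/2)^DIM('a))"
    using assms by (simp add: emeasure_ball ennreal_mult ennreal_of_nat_eq_real_of_nat)
  then have "?V * (real (card S) * (d/2)^DIM('a)) \<le> ?V * (\<rho> + d/2)^DIM('a)"
    using assms by (subst (asm) ennreal_le_iff) (auto simp: algebra_simps)
  then show ?thesis by (subst (asm) mult_le_cancel_left_pos) auto
qed

text \<open>A separated set of maximal cardinality is a net; the volume bound makes the maximum exist.\<close>
lemma obtain_separated_net:
  fixes E :: "'a::euclidean_space set"
  assumes "bounded E" "0 < d"
  obtains S where "S \<subseteq> E" "finite S" "separated d S" "\<And>x. x \<in> E \<Longrightarrow> \<exists>y\<in>S. dist x y \<le> d"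
proof -
  obtain \<rho> c where Ec: "E \<subseteq> cball c \<rho>" "0 \<le> \<rho>" using assms(1) bounded_subset_cball by blast
  define P where "P T \<longleftrightarrow> T \<subseteq> E \<and> finite T \<and> separated d T" for T
  define b where "b = nat \<lfloor>(\<rho> + d/2)^DIM('a) / (d/2)^DIM('a)\<rfloor> + 1"
  have "card T < b" if "P T" for T
  proof -
    have "real (card T) * (d/2)^DIM('a) \<le> (\<rho> + d/2)^DIM('a)"
      using that Ec assms by (intro separated_card_volume_bound[where c = c]) (auto simp: P_def)
    then have "real (card T) \<le> (\<rho> + d/2)^DIM('a) / (d/2)^DIM('a)"
      using assms by (simp add: field_simps)
    then show ?thesis unfolding b_def by linarith
  qed
  moreover have "P {}" by (simp add: P_def separated_def)
  ultimately obtain S where S: "P S" "\<And>T. P T \<Longrightarrow> card T \<le> card S"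
    using ex_has_greatest_nat[of P "{}" card b] by blast
  show ?thesis
  proof (rule that)
    show "S \<subseteq> E" "finite S" "separated d S" using S(1) by (auto simp: P_def)
    fix x assume x: "x \<in> E"
    show "\<exists>y\<in>S. dist x y \<le> d"
    proof (rule ccontr)
      assume "\<not> ?thesis"
      then have far: "\<forall>y\<in>S. d < dist x y" by auto
      then have "x \<notin> S" using assms by auto
      have "P (insert x S)" using S(1) x far by (auto simp: P_def separated_def dist_commute)
      then have "card (insert x S) \<le> card S" by (rule S(2))
      then show False using \<open>x \<notin> S\<close> S(1) by (simp add: P_def)
    qed
  qed
qed

lemma covnum_le_net:
  fixes S E :: "'a::euclidean_space set"
  assumes "0 < r" "finite S" "\<And>x. x \<in> E \<Longrightarrow> \<exists>y\<in>S. dist x y \<le> r/2"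
  shows "covnum r E \<le> card S"
proof -
  have "finite ((\<lambda>p. cball p (r/2)) ` S)" "E \<subseteq> \<Union>((\<lambda>p. cball p (r/2)) ` S)"
    "\<forall>A\<in>(\<lambda>p. cball p (r/2)) ` S. diameter A \<le> r"
    using assms by (auto simp: dist_commute)
  then have "covnum r E \<le> card ((\<lambda>p. cball p (r/2)) ` S)" by (rule covnum_le_card)
  also have "\<dots> \<le> card S" using assms(2) by (rule card_image_le)
  finally show ?thesis .
qed

lemma obtain_separated_net_covnum:
  fixes E :: "'a::euclidean_space set"
  assumes "bounded E" "0 < r"
  obtains S where "S \<subseteq> E" "finite S" "separated (r/2) S" "\<And>x. x \<in> E \<Longrightarrow> \<exists>y\<in>S. dist x y \<le> r/2"
    "covnum r E \<le> card S"
proof -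
  obtain S where S: "S \<subseteq> E" "finite S" "separated (r/2) S" "\<And>x. x \<in> E \<Longrightarrow> \<exists>y\<in>S. dist x y \<le> r/2"
    using obtain_separated_net[OF assms(1)] assms(2) by (metis half_gt_zero)
  with assms(2) show ?thesis using that covnum_le_net by blast
qed

lemma obtain_optimal_cover:
  fixes E :: "'a::euclidean_space set"
  assumes "bounded E" "0 < r"
  obtains C where "finite C" "card C = covnum r E" "E \<subseteq> \<Union>C" "\<forall>A\<in>C. diameter A \<le> r"
proof -
  obtain S where "finite S" "\<And>x. x \<in> E \<Longrightarrow> \<exists>y\<in>S. dist x y \<le> r/2"
    using obtain_separated_net_covnum[OF assms] by metis
  then have cover: "finite ((\<lambda>p. cball p (r/2)) ` S)" "E \<subseteq> \<Union>((\<lambda>p. cball p (r/2)) ` S)"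
    "\<forall>A\<in>(\<lambda>p. cball p (r/2)) ` S. diameter A \<le> r"
    using assms(2) by (auto simp: dist_commute)
  have "\<exists>C. finite C \<and> card C = covnum r E \<and> E \<subseteq> \<Union>C \<and> (\<forall>A\<in>C. diameter A \<le> r)"
    unfolding covnum_def by (rule LeastI_ex) (use cover in blast)
  then show ?thesis using that by blast
qed

lemma covnum_pos:
  fixes E :: "'a::euclidean_space set"
  assumes "bounded E" "0 < r" "E \<noteq> {}"
  shows "0 < covnum r E"
proof -
  obtain C where "finite C" "card C = covnum r E" "E \<subseteq> \<Union>C"
    using obtain_optimal_cover[OF assms(1,2)] by metis
  with assms(3) show ?thesis by (metis Union_empty card_gt_0_iff subset_empty)
qed

text \<open>The diameter of an unbounded set is the supremum of an unbounded set of reals, an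
  unspecified value that is the same for all unbounded sets.\<close>
lemma diameter_unbounded:
  fixes A B :: "'a::metric_space set"
  assumes "\<not> bounded A" "\<not> bounded B"
  shows "diameter A = diameter B"
proof -
  have no_bound: "\<not> (\<forall>p\<in>(\<lambda>(x, y). dist x y) ` (S \<times> S). p \<le> z)" if unb: "\<not> bounded S"
    for S :: "'a set" and z
  proof
    assume le: "\<forall>p\<in>(\<lambda>(x, y). dist x y) ` (S \<times> S). p \<le> z"
    obtain a where "a \<in> S" using unb by (metis bounded_empty ex_in_conv)
    with le have "\<forall>y\<in>S. dist a y \<le> z" by auto
    with unb show False unfolding bounded_def by blast
  qed
  have "(\<lambda>z. \<forall>p\<in>(\<lambda>(x, y). dist x y) ` (A \<times> A). p \<le> z) = (\<lambda>z. \<forall>p\<in>(\<lambda>(x, y). dist x y) ` (B \<times> B). p \<le> z)"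
    using no_bound[OF assms(1)] no_bound[OF assms(2)] by (intro ext iffI) blast+
  moreover have "A \<noteq> {}" "B \<noteq> {}" using assms by auto
  ultimately show ?thesis unfolding diameter_def Sup_real_def by simp
qed

lemma card_separated_le_covnum:
  fixes E :: "'a::euclidean_space set"
  assumes "bounded E" "0 < d" "d < diameter (UNIV::'a set)" "T \<subseteq> E" "finite T" "separated d T"
  shows "card T \<le> covnum d E"
proof -
  obtain C where C: "finite C" "card C = covnum d E" "E \<subseteq> \<Union>C" "\<forall>A\<in>C. diameter A \<le> d"
    by (rule obtain_optimal_cover[OF assms(1,2)])
  have "\<forall>x\<in>T. \<exists>A\<in>C. x \<in> A" using C(3) assms(4) by blast
  then obtain f where f: "\<And>x. x \<in> T \<Longrightarrow> f x \<in> C" "\<And>x. x \<in> T \<Longrightarrow> x \<in> f x"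
    by metis
  have "inj_on f T"
  proof (rule inj_onI)
    fix x y assume xy: "x \<in> T" "y \<in> T" "f x = f y"
    have diam: "diameter (f x) \<le> d" using C(4) f(1)[OF xy(1)] by blast
    have "bounded (f x)"
    proof (rule ccontr)
      assume "\<not> bounded (f x)"
      then have "diameter (f x) = diameter (UNIV::'a set)"
        by (rule diameter_unbounded[OF _ not_bounded_UNIV])
      with diam assms(3) show False by linarith
    qed
    then have "dist x y \<le> diameter (f x)"
      using f(2) xy by (metis diameter_bounded_bound)
    with diam have "\<not> d < dist x y" by linarith
    then show "x = y" using assms(6) xy(1,2) unfolding separated_def by blast
  qed
  moreover have "f ` T \<subseteq> C" using f by auto
  ultimately have "card T \<le> card C" using card_inj_on_le C(1) by blast
  then show ?thesis using C(2) by simp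
qed

lemma card_ball_le_covnum:
  fixes X :: "'a::euclidean_space set"
  assumes "bounded X" "S \<subseteq> X" "finite S" "separated d S" "0 < d" "d < diameter (UNIV::'a set)"
  shows "card {j\<in>S. dist i j < R} \<le> covnum d (ball i R \<inter> X)"
  using assms by (intro card_separated_le_covnum) (auto simp: bounded_Int intro: separated_subset)

section \<open>Growth bounds behind the Assouad dimension and spectrum\<close>

definition assouad_growth :: "'a::metric_space set \<Rightarrow> real \<Rightarrow> real \<Rightarrow> bool" where
  "assouad_growth X C \<alpha> \<longleftrightarrow> (\<forall>x\<in>X. \<forall>r R. 0 < r \<and> r < R \<longrightarrow>
      real (covnum r (ball x R \<inter> X)) \<le> C * (R / r) powr \<alpha>)"

definition spectral_growth :: "real \<Rightarrow> 'a::metric_space set \<Rightarrow> real \<Rightarrow> real \<Rightarrow> bool" where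
  "spectral_growth \<theta> X C \<alpha> \<longleftrightarrow> (\<forall>x\<in>X. \<forall>r R. 0 < r \<and> r \<le> R powr (1 / \<theta>) \<and> R powr (1 / \<theta>) < R \<and> R < 1 \<longrightarrow>
      real (covnum r (ball x R \<inter> X)) \<le> C * (R / r) powr \<alpha>)"

lemma assouad_dim_eq_Inf: "assouad_dim X = Inf (ereal ` {\<alpha>. 0 < \<alpha> \<and> (\<exists>C>0. assouad_growth X C \<alpha>)})"
  by (simp add: assouad_dim_def assouad_growth_def)

lemma upper_assouad_spectrum_eq_Inf:
  "upper_assouad_spectrum \<theta> X = Inf (ereal ` {\<alpha>. 0 < \<alpha> \<and> (\<exists>C>0. spectral_growth \<theta> X C \<alpha>)})"
  by (simp add: upper_assouad_spectrum_def spectral_growth_def)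

lemma assouad_growth_imp_spectral_growth: "assouad_growth X C \<alpha> \<Longrightarrow> spectral_growth \<theta> X C \<alpha>"
  unfolding assouad_growth_def spectral_growth_def by force

lemma assouad_growth_mono:
  assumes "assouad_growth X C \<alpha>" "\<alpha> \<le> \<beta>" "0 \<le> C"
  shows "assouad_growth X C \<beta>"
  unfolding assouad_growth_def
proof (intro ballI allI impI)
  fix x and r R :: real assume "x \<in> X" and rR: "0 < r \<and> r < R"
  then have "real (covnum r (ball x R \<inter> X)) \<le> C * (R / r) powr \<alpha>"
    using assms(1) by (auto simp: assouad_growth_def)
  also have "\<dots> \<le> C * (R / r) powr \<beta>"
    using rR assms(2,3) by (intro mult_left_mono powr_mono) auto
  finally show "real (covnum r (ball x R \<inter> X)) \<le> C * (R / r) powr \<beta>" .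
qed

lemma spectral_growth_mono:
  assumes "spectral_growth \<theta> X C \<alpha>" "\<alpha> \<le> \<beta>" "0 \<le> C"
  shows "spectral_growth \<theta> X C \<beta>"
  unfolding spectral_growth_def
proof (intro ballI allI impI)
  fix x and r R :: real assume "x \<in> X" and rR: "0 < r \<and> r \<le> R powr (1 / \<theta>) \<and> R powr (1 / \<theta>) < R \<and> R < 1"
  then have "real (covnum r (ball x R \<inter> X)) \<le> C * (R / r) powr \<alpha>"
    using assms(1) by (auto simp: spectral_growth_def)
  also have "\<dots> \<le> C * (R / r) powr \<beta>"
    using rR assms(2,3) by (intro mult_left_mono powr_mono) auto
  finally show "real (covnum r (ball x R \<inter> X)) \<le> C * (R / r) powr \<beta>" .
qed

lemma obtain_assouad_growth:
  assumes "assouad_dim X < ereal b"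
  obtains \<alpha> C where "\<alpha> < b" "0 < C" "assouad_growth X C \<alpha>"
  using assms unfolding assouad_dim_eq_Inf by (auto simp: Inf_less_iff)

lemma obtain_spectral_growth:
  assumes "upper_assouad_spectrum \<theta> X < ereal b"
  obtains \<alpha> C where "\<alpha> < b" "0 < C" "spectral_growth \<theta> X C \<alpha>"
  using assms unfolding upper_assouad_spectrum_eq_Inf by (auto simp: Inf_less_iff)

lemma assouad_growth_DIM:
  fixes X :: "'a::euclidean_space set"
  shows "assouad_growth X (5^DIM('a)) DIM('a)"
  unfolding assouad_growth_def
proof (intro ballI allI impI)
  fix x and r R :: real assume rR: "0 < r \<and> r < R"
  obtain S where S: "S \<subseteq> ball x R \<inter> X" "finite S" "separated (r/2) S" "covnum r (ball x R \<inter> X) \<le> card S"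
    using obtain_separated_net_covnum[of "ball x R \<inter> X" r] rR by (metis bounded_Int bounded_ball)
  have "real (card S) * (r/2/2)^DIM('a) \<le> (R + r/2/2)^DIM('a)"
    using S rR by (intro separated_card_volume_bound[where c = x]) auto
  also have "\<dots> \<le> (5 * R / 4)^DIM('a)" using rR by (intro power_mono) auto
  finally have "real (card S) \<le> (5 * R / 4)^DIM('a) / (r / 4)^DIM('a)"
    using rR by (simp add: pos_le_divide_eq)
  also have "\<dots> = 5^DIM('a) * (R / r) powr DIM('a)"
    using rR by (simp add: powr_realpow power_divide[symmetric] power_mult_distrib[symmetric])
  finally show "real (covnum r (ball x R \<inter> X)) \<le> 5^DIM('a) * (R / r) powr DIM('a)"
    using S(4) by linarith
qed

lemma assouad_dim_le_DIM: "assouad_dim (X :: 'a::euclidean_space set) \<le> DIM('a)"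
  unfolding assouad_dim_eq_Inf
  using assouad_growth_DIM[of X] by (intro Inf_lower imageI CollectI) (auto intro!: exI[of _ "5^DIM('a)"])

lemma upper_assouad_spectrum_le_DIM: "upper_assouad_spectrum \<theta> (X :: 'a::euclidean_space set) \<le> DIM('a)"
  unfolding upper_assouad_spectrum_eq_Inf
  using assouad_growth_imp_spectral_growth[OF assouad_growth_DIM[of X]]
  by (intro Inf_lower imageI CollectI) (auto intro!: exI[of _ "5^DIM('a)"])

lemma assouad_dim_nonneg: "0 \<le> assouad_dim X"
  unfolding assouad_dim_eq_Inf by (intro Inf_greatest) auto

lemma upper_assouad_spectrum_nonneg: "0 \<le> upper_assouad_spectrum \<theta> X"
  unfolding upper_assouad_spectrum_eq_Inf by (intro Inf_greatest) auto

section \<open>Energy and capacity\<close>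

lemma phi_kernel_nonneg: "0 \<le> phi_kernel s r z"
  by (simp add: phi_kernel_def)

lemma borel_measurable_phi_kernel [measurable]:
  "(\<lambda>z. phi_kernel s r z) \<in> borel_measurable (borel :: 'a::euclidean_space measure)"
  unfolding phi_kernel_def by measurable

lemma phi_kernel_ge:
  assumes "norm z \<le> D" "0 \<le> D" "0 < r" "0 \<le> s"
  shows "min 1 ((r / (D + 1)) powr s) \<le> phi_kernel s r z"
proof (cases "z = 0")
  case False
  then have "r / (D + 1) \<le> r / norm z"
    using assms by (intro divide_left_mono) auto
  then have "(r / (D + 1)) powr s \<le> (r / norm z) powr s"
    using assms by (intro powr_mono2) auto
  then show ?thesis using False by (simp add: phi_kernel_def)
qed (simp add: phi_kernel_def)

definition uniform_borel :: "'a::euclidean_space set \<Rightarrow> 'a measure" where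
  "uniform_borel S = distr (measure_pmf (pmf_of_set S)) borel id"

lemma nn_integral_uniform_borel:
  assumes "finite S" "S \<noteq> {}" "f \<in> borel_measurable borel"
  shows "(\<integral>\<^sup>+x. f x \<partial>uniform_borel S) = (\<Sum>x\<in>S. f x) / of_nat (card S)"
  using assms by (simp add: uniform_borel_def nn_integral_distr nn_integral_pmf_of_set)

lemma uniform_borel_admissible:
  fixes S :: "'a::euclidean_space set"
  assumes "finite S" "S \<noteq> {}" "S \<subseteq> X"
  shows "sets (uniform_borel S) = sets borel" "prob_space (uniform_borel S)"
    "emeasure (uniform_borel S) (UNIV - closure X) = 0"
proof -
  show "sets (uniform_borel S) = sets borel" by (simp add: uniform_borel_def)
  show "prob_space (uniform_borel S)" unfolding uniform_borel_def
    by (rule prob_space.prob_space_distr) (auto simp: prob_space_measure_pmf)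
  show "emeasure (uniform_borel S) (UNIV - closure X) = 0"
    using assms closure_subset[of X] by (auto simp: uniform_borel_def emeasure_distr emeasure_pmf_of_set)
qed

lemma energy_uniform_borel:
  fixes S :: "'a::euclidean_space set"
  assumes "finite S" "S \<noteq> {}"
  shows "(\<integral>\<^sup>+x. (\<integral>\<^sup>+y. ennreal (phi_kernel s r (x - y)) \<partial>uniform_borel S) \<partial>uniform_borel S)
     = ennreal ((\<Sum>i\<in>S. \<Sum>j\<in>S. phi_kernel s r (i - j)) / (real (card S))^2)"
proof -
  have n: "(of_nat (card S) :: ennreal) = ennreal (real (card S))" "0 < real (card S)"
    using assms by (auto simp: ennreal_of_nat_eq_real_of_nat card_gt_0_iff)
  have "(\<integral>\<^sup>+x. (\<integral>\<^sup>+y. ennreal (phi_kernel s r (x - y)) \<partial>uniform_borel S) \<partial>uniform_borel S)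
      = (\<integral>\<^sup>+x. ennreal ((\<Sum>j\<in>S. phi_kernel s r (x - j)) / real (card S)) \<partial>uniform_borel S)"
    using assms n by (simp add: nn_integral_uniform_borel sum_ennreal phi_kernel_nonneg sum_nonneg
        divide_ennreal)
  also have "\<dots> = ennreal ((\<Sum>i\<in>S. (\<Sum>j\<in>S. phi_kernel s r (i - j)) / real (card S)) / real (card S))"
    using assms n by (simp add: nn_integral_uniform_borel sum_ennreal phi_kernel_nonneg sum_nonneg
        divide_ennreal)
  also have "\<dots> = ennreal ((\<Sum>i\<in>S. \<Sum>j\<in>S. phi_kernel s r (i - j)) / (real (card S))^2)"
    by (simp add: sum_divide_distrib[symmetric] power2_eq_square)
  finally show ?thesis .
qed

lemma min_energy_le_discrete:
  fixes S :: "'a::euclidean_space set"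
  assumes "finite S" "S \<noteq> {}" "S \<subseteq> X"
  shows "min_energy s r X \<le> ennreal ((\<Sum>i\<in>S. \<Sum>j\<in>S. phi_kernel s r (i - j)) / (real (card S))^2)"
  unfolding min_energy_def energy_uniform_borel[OF assms(1,2), symmetric]
  using uniform_borel_admissible[OF assms] by (intro Inf_lower) blast

text \<open>This keeps the minimal energy away from 0, so that the capacity is not the junk value 1/0.\<close>
lemma min_energy_ge:
  fixes X :: "'a::euclidean_space set"
  assumes "bounded X" "0 < r" "0 \<le> s"
  shows "ennreal (min 1 ((r / (diameter X + 1)) powr s)) \<le> min_energy s r X"
  unfolding min_energy_def
proof (rule Inf_greatest, clarify)
  fix \<mu> :: "'a measure"
  assume \<mu>: "sets \<mu> = sets borel" "prob_space \<mu>" "emeasure \<mu> (UNIV - closure X) = 0"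
  define c where "c = min 1 ((r / (diameter X + 1)) powr s)"
  have "UNIV - closure X \<in> null_sets \<mu>" using \<mu> by (auto intro: null_setsI)
  then have ae: "AE x in \<mu>. x \<in> closure X" by (rule AE_I') auto
  have c: "c \<le> phi_kernel s r (x - y)" if "x \<in> closure X" "y \<in> closure X" for x y
  proof (rule phi_kernel_ge[OF _ diameter_ge_0[OF assms(1)] assms(2,3), folded c_def])
    show "norm (x - y) \<le> diameter X"
      using diameter_bounded_bound[of "closure X" x y] that assms(1)
      by (simp add: diameter_closure dist_norm bounded_closure)
  qed
  have one: "(\<integral>\<^sup>+x. ennreal c \<partial>\<mu>) = ennreal c"
    using prob_space.emeasure_space_1[OF \<mu>(2)] by simp
  have inner: "ennreal c \<le> (\<integral>\<^sup>+y. ennreal (phi_kernel s r (x - y)) \<partial>\<mu>)" if "x \<in> closure X" for x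
  proof -
    have "AE y in \<mu>. ennreal c \<le> ennreal (phi_kernel s r (x - y))"
      using ae by eventually_elim (simp add: ennreal_leI c that)
    then have "(\<integral>\<^sup>+y. ennreal c \<partial>\<mu>) \<le> (\<integral>\<^sup>+y. ennreal (phi_kernel s r (x - y)) \<partial>\<mu>)"
      by (rule nn_integral_mono_AE)
    then show ?thesis by (simp only: one)
  qed
  have "AE x in \<mu>. ennreal c \<le> (\<integral>\<^sup>+y. ennreal (phi_kernel s r (x - y)) \<partial>\<mu>)"
    using ae by eventually_elim (rule inner)
  then have "(\<integral>\<^sup>+x. ennreal c \<partial>\<mu>) \<le> (\<integral>\<^sup>+x. (\<integral>\<^sup>+y. ennreal (phi_kernel s r (x - y)) \<partial>\<mu>) \<partial>\<mu>)"
    by (rule nn_integral_mono_AE)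
  then show "ennreal c \<le> (\<integral>\<^sup>+x. (\<integral>\<^sup>+y. ennreal (phi_kernel s r (x - y)) \<partial>\<mu>) \<partial>\<mu>)"
    unfolding one .
qed

lemma capacity_ge_discrete:
  fixes X :: "'a::euclidean_space set"
  assumes "bounded X" "0 < r" "0 \<le> s" "finite S" "S \<noteq> {}" "S \<subseteq> X"
    and B: "(\<Sum>i\<in>S. \<Sum>j\<in>S. phi_kernel s r (i - j)) \<le> B"
  shows "(real (card S))^2 / B \<le> capacity s r X"
proof -
  define c where "c = min 1 ((r / (diameter X + 1)) powr s)"
  have c: "0 < c" using assms diameter_ge_0[OF assms(1)] by (simp add: c_def)
  have N: "0 < real (card S)" using assms by (simp add: card_gt_0_iff)
  have "min_energy s r X \<le> ennreal ((\<Sum>i\<in>S. \<Sum>j\<in>S. phi_kernel s r (i - j)) / (real (card S))^2)"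
    by (rule min_energy_le_discrete[OF assms(4,5,6)])
  also have "\<dots> \<le> ennreal (B / (real (card S))^2)"
    using B by (intro ennreal_leI divide_right_mono) auto
  finally have hi: "min_energy s r X \<le> ennreal (B / (real (card S))^2)" .
  then obtain e where e: "min_energy s r X = ennreal e" "0 \<le> e"
    by (cases "min_energy s r X") (auto simp: top_unique)
  have "c \<le> e"
    using min_energy_ge[OF assms(1-3)] e c by (simp add: c_def)
  with hi e c have e_le: "e \<le> B / (real (card S))^2"
    by (auto simp: ennreal_le_iff2)
  have "0 < e" using \<open>c \<le> e\<close> c by linarith
  with e_le N have "0 < B" by (smt (verit) divide_nonpos_pos zero_less_power)
  then have "1 / (B / (real (card S))^2) \<le> 1 / e"
    using e_le \<open>0 < e\<close> N by (intro divide_left_mono) auto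
  then show ?thesis unfolding capacity_def using e by simp
qed

section \<open>Dyadic decomposition of the kernel\<close>

lemma power_two_powr: "((2::real) ^ k) powr a = (2 powr a) ^ k"
  by (simp add: powr_realpow[symmetric] powr_powr powr_power mult.commute)

lemma power_two_powr_le:
  fixes a x :: real
  assumes "0 \<le> a" "2 ^ k \<le> x"
  shows "(2 powr a) ^ k \<le> x powr a"
  using powr_mono2[OF assms(1) _ assms(2)] by (simp add: power_two_powr)

lemma power_two_powr_le_neg:
  fixes a x :: real
  assumes "a \<le> 0" "0 < x" "x \<le> 2 ^ k"
  shows "(2 powr a) ^ k \<le> x powr a"
  using powr_mono2'[OF assms] by (simp add: power_two_powr)

lemma less_powr_of_powr_inverse_less:
  fixes x r \<theta> :: real
  assumes "0 < x" "0 < \<theta>" "x powr (1/\<theta>) < r"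
  shows "x < r powr \<theta>"
proof -
  have "(x powr (1/\<theta>)) powr \<theta> < r powr \<theta>"
    using assms by (intro powr_less_mono2) auto
  then show ?thesis using assms by (simp add: powr_powr)
qed

lemma geometric_sum_le_gt_1:
  fixes q Q :: real
  assumes "1 < q" "finite A" "0 \<le> Q" "\<And>k. k \<in> A \<Longrightarrow> q ^ k \<le> Q"
  shows "(\<Sum>k\<in>A. q ^ k) \<le> q / (q - 1) * Q"
proof (cases "A = {}")
  case False
  define n where "n = Max A"
  have "(\<Sum>k\<in>A. q ^ k) \<le> (\<Sum>k=0..n. q ^ k)"
    using assms(1,2) False by (intro sum_mono2) (auto simp: n_def)
  also have "\<dots> = (q ^ Suc n - 1) / (q - 1)"
    using sum_gp_multiplied[of 0 n q] assms(1) by (simp add: field_simps)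
  also have "\<dots> \<le> q / (q - 1) * q ^ n"
    using assms(1) by (simp add: field_simps)
  also have "\<dots> \<le> q / (q - 1) * Q"
    using assms False by (intro mult_left_mono) (auto simp: n_def)
  finally show ?thesis .
qed (use assms in simp)

lemma geometric_sum_le_lt_1:
  fixes t Q :: real
  assumes "0 < t" "t < 1" "finite A" "0 \<le> Q" "\<And>k. k \<in> A \<Longrightarrow> t ^ k \<le> Q"
  shows "(\<Sum>k\<in>A. t ^ k) \<le> Q / (1 - t)"
proof (cases "A = {}")
  case False
  define m where "m = Min A"
  define n where "n = Max A"
  have "(\<Sum>k\<in>A. t ^ k) \<le> (\<Sum>k=m..n. t ^ k)"
    using assms False by (intro sum_mono2) (auto simp: m_def n_def)
  also have "\<dots> = (t ^ m - t ^ Suc n) / (1 - t)"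
    using sum_gp_multiplied[of m n t] assms False by (simp add: field_simps m_def n_def)
  also have "\<dots> \<le> Q / (1 - t)"
  proof (rule divide_right_mono)
    have "t ^ m \<le> Q" using assms(3,5) False by (simp add: m_def)
    moreover have "0 \<le> t ^ Suc n" using assms(1) by simp
    ultimately show "t ^ m - t ^ Suc n \<le> Q" by linarith
  qed (use assms(2) in simp)
  finally show ?thesis .
qed (use assms in simp)

lemma phi_kernel_le_dyadic_sum:
  assumes "0 < r" "0 \<le> s" "norm z < 2 ^ K * r"
  shows "phi_kernel s r z \<le> 2 powr s * (\<Sum>k\<le>K. (2 powr - s) ^ k * (if norm z < 2 ^ k * r then 1 else 0))"
  using assms(3)
proof (induction K)
  case 0
  have "phi_kernel s r z \<le> 1" by (simp add: phi_kernel_def)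
  also have "1 \<le> 2 powr s" using assms(2) by (intro ge_one_powr_ge_zero) auto
  finally show ?case using 0 by simp
next
  case (Suc K)
  let ?f = "\<lambda>k. (2 powr - s) ^ k * (if norm z < 2 ^ k * r then 1 else (0::real))"
  have "0 \<le> sum ?f {..K}" by (intro sum_nonneg) auto
  show ?case
  proof (cases "norm z < 2 ^ K * r")
    case True
    then have "phi_kernel s r z \<le> 2 powr s * sum ?f {..K}" by (rule Suc.IH)
    also have "\<dots> \<le> 2 powr s * sum ?f {..Suc K}" by (simp add: add_increasing2)
    finally show ?thesis .
  next
    case False
    then have far: "2 ^ K * r \<le> norm z" by simp
    moreover have "0 < 2 ^ K * r" using assms(1) by simp
    ultimately have "0 < norm z" by linarith
    then have "phi_kernel s r z \<le> (r / norm z) powr s" by (simp add: phi_kernel_def)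
    also have "\<dots> \<le> (1 / 2 ^ K) powr s"
      using far \<open>0 < norm z\<close> assms(1,2) by (intro powr_mono2) (auto simp: field_simps)
    also have "\<dots> = 2 powr s * ?f (Suc K)"
      using Suc.prems by (simp add: powr_divide power_two_powr powr_minus field_simps)
    also have "\<dots> \<le> 2 powr s * sum ?f {..Suc K}"
      using \<open>0 \<le> sum ?f {..K}\<close> by simp
    finally show ?thesis .
  qed
qed

lemma sum_phi_kernel_le_dyadic:
  fixes S :: "'a::real_normed_vector set"
  assumes "finite S" "0 < r" "0 \<le> s" "\<forall>j\<in>S. dist i j < 2 ^ K * r"
  shows "(\<Sum>j\<in>S. phi_kernel s r (i - j))
           \<le> 2 powr s * (\<Sum>k\<le>K. (2 powr - s) ^ k * real (card {j\<in>S. dist i j < 2 ^ k * r}))"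
proof -
  have "(\<Sum>j\<in>S. phi_kernel s r (i - j))
      \<le> (\<Sum>j\<in>S. 2 powr s * (\<Sum>k\<le>K. (2 powr - s) ^ k * (if dist i j < 2 ^ k * r then 1 else 0)))"
    using assms by (intro sum_mono) (simp add: phi_kernel_le_dyadic_sum dist_norm)
  also have "\<dots> = 2 powr s * (\<Sum>k\<le>K. (2 powr - s) ^ k * (\<Sum>j\<in>S. if dist i j < 2 ^ k * r then 1 else 0))"
    unfolding sum_distrib_left by (rule sum.swap)
  also have "\<dots> = 2 powr s * (\<Sum>k\<le>K. (2 powr - s) ^ k * real (card {j\<in>S. dist i j < 2 ^ k * r}))"
    using assms(1) by (simp add: sum.If_cases Int_def conj_commute)
  finally show ?thesis .
qed

lemma dyadic_weight:
  fixes r s \<alpha> :: real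
  assumes "0 < r"
  shows "(2 powr - s) ^ k * (2 * (2 ^ k * r) / r) powr \<alpha> = 2 powr \<alpha> * (2 powr (\<alpha> - s)) ^ k"
proof -
  have "(2 * (2 ^ k * r) / r) powr \<alpha> = 2 powr \<alpha> * (2 powr \<alpha>) ^ k"
    using assms by (simp add: power_two_powr[of "Suc k", simplified] mult.assoc)
  then show ?thesis
    by (simp add: powr_diff powr_minus power_mult_distrib[symmetric] divide_inverse mult.commute)
qed

section \<open>Logarithmic ratios\<close>

lemma ereal_diff_le_epsilon:
  fixes D P :: ereal
  assumes "\<And>e. 0 < e \<Longrightarrow> D - ereal (m + e) \<le> P"
  shows "D - ereal m \<le> P"
proof (rule ereal_le_epsilon2)
  fix e :: real assume "0 < e"
  with assms[OF this] show "D - ereal m \<le> P + ereal e" by (cases D; cases P) auto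
qed

lemma log_ratio_ge:
  fixes f g K M e r :: real
  assumes "0 < K" "0 < e" "0 < r" "r < 1" "r < exp (- \<bar>ln K\<bar> / e)" "1 \<le> g" "g * r powr M / K \<le> f"
  shows "ln g / - ln r - (M + e) \<le> ln f / - ln r"
proof -
  define L where "L = - ln r"
  have L: "0 < L" using assms(3,4) by (simp add: L_def)
  have "ln r < - \<bar>ln K\<bar> / e" using assms(3,5) by (metis exp_gt_zero ln_exp ln_less_cancel_iff)
  then have lnK: "ln K \<le> e * L" using assms(2) by (simp add: L_def field_simps)
  have "0 < g * r powr M / K" using assms by simp
  then have "ln (g * r powr M / K) \<le> ln f" using assms(7) by simp
  moreover have "ln (g * r powr M / K) = ln g - M * L - ln K"
    using assms by (simp add: ln_mult ln_div ln_powr L_def)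
  ultimately have "ln g - (M + e) * L \<le> ln f" using lnK by (simp add: algebra_simps)
  then have "(ln g - (M + e) * L) / L \<le> ln f / L" using L by (intro divide_right_mono) auto
  moreover have "(ln g - (M + e) * L) / L = ln g / L - (M + e)" using L by (simp add: field_simps)
  ultimately show ?thesis by (simp add: L_def)
qed

lemma Limsup_log_ratio_ge:
  fixes f g :: "real \<Rightarrow> real"
  assumes "0 < K" and ev: "eventually (\<lambda>r. 1 \<le> g r \<and> g r * r powr M / K \<le> f r) (at_right 0)"
  shows "Limsup (at_right 0) (\<lambda>r. ereal (ln (g r) / - ln r)) - ereal M
           \<le> Limsup (at_right 0) (\<lambda>r. ereal (ln (f r) / - ln r))"
proof (rule ereal_diff_le_epsilon)
  fix e :: real assume e: "0 < e"
  have "eventually (\<lambda>r. 0 < r \<and> r < min 1 (exp (- \<bar>ln K\<bar> / e))) (at_right 0)"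
    unfolding eventually_at_right_field by (intro exI[of _ "min 1 (exp (- \<bar>ln K\<bar> / e))"]) auto
  with ev have "eventually (\<lambda>r. ln (g r) / - ln r - (M + e) \<le> ln (f r) / - ln r) (at_right 0)"
    by eventually_elim (rule log_ratio_ge[OF assms(1) e]; auto)
  then have "eventually (\<lambda>r. ereal (ln (g r) / - ln r) + ereal (- (M + e)) \<le> ereal (ln (f r) / - ln r))
      (at_right 0)"
    by eventually_elim simp
  then have le: "Limsup (at_right 0) (\<lambda>r. ereal (ln (g r) / - ln r) + ereal (- (M + e)))
      \<le> Limsup (at_right 0) (\<lambda>r. ereal (ln (f r) / - ln r))"
    by (rule Limsup_mono)
  have eq: "Limsup (at_right 0) (\<lambda>r. ereal (ln (g r) / - ln r) + ereal (- (M + e)))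
      = Limsup (at_right 0) (\<lambda>r. ereal (ln (g r) / - ln r)) + ereal (- (M + e))"
    by (rule Limsup_add_ereal_right) simp_all
  show "Limsup (at_right 0) (\<lambda>r. ereal (ln (g r) / - ln r)) - ereal (M + e)
      \<le> Limsup (at_right 0) (\<lambda>r. ereal (ln (f r) / - ln r))"
    unfolding minus_ereal_def uminus_ereal.simps eq[symmetric] by (rule le)
qed

section \<open>The capacity estimate\<close>

text \<open>Covering numbers only detect separation below the junk value diameter UNIV (see
  card_separated_le_covnum), hence the last assumption.\<close>
locale growth_exponents =
  fixes X :: "'a::euclidean_space set" and s \<theta> \<alpha>\<^sub>1 C\<^sub>1 \<alpha>\<^sub>2 C\<^sub>2 :: real
  assumes bounded_X: "bounded X" and X_nonempty: "X \<noteq> {}"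
    and s_pos: "0 < s" and \<theta>_pos: "0 < \<theta>" and \<theta>_less_1: "\<theta> < 1"
    and spectral: "spectral_growth \<theta> X C\<^sub>1 \<alpha>\<^sub>1" and s_less_\<alpha>\<^sub>1: "s < \<alpha>\<^sub>1" and C\<^sub>1_pos: "0 < C\<^sub>1"
    and assouad: "assouad_growth X C\<^sub>2 \<alpha>\<^sub>2" and s_less_\<alpha>\<^sub>2: "s < \<alpha>\<^sub>2" and C\<^sub>2_pos: "0 < C\<^sub>2"
    and diameter_UNIV_pos: "0 < diameter (UNIV :: 'a set)"
begin

lemma card_ball_le_spectral:
  assumes "S \<subseteq> X" "finite S" "separated (r/2) S" "i \<in> X" "0 < r" "r/2 < diameter (UNIV::'a set)"
    and "0 < R" "R < 1" "r/2 \<le> R powr (1/\<theta>)"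
  shows "real (card {j\<in>S. dist i j < R}) \<le> C\<^sub>1 * (2 * R / r) powr \<alpha>\<^sub>1"
proof -
  have "R powr (1/\<theta>) < R powr 1"
    using assms \<theta>_pos \<theta>_less_1 by (intro powr_less_mono') (auto simp: field_simps)
  then have "real (covnum (r/2) (ball i R \<inter> X)) \<le> C\<^sub>1 * (R / (r/2)) powr \<alpha>\<^sub>1"
    using assms by (intro spectral[unfolded spectral_growth_def, rule_format]) auto
  moreover have "card {j\<in>S. dist i j < R} \<le> covnum (r/2) (ball i R \<inter> X)"
    using assms bounded_X by (intro card_ball_le_covnum) auto
  ultimately show ?thesis by (simp add: mult.commute)
qed

lemma card_ball_le_assouad:
  assumes "S \<subseteq> X" "finite S" "separated (r/2) S" "i \<in> X" "0 < r" "r/2 < diameter (UNIV::'a set)"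
    and "r/2 < R"
  shows "real (card {j\<in>S. dist i j < R}) \<le> C\<^sub>2 * (2 * R / r) powr \<alpha>\<^sub>2"
proof -
  have "real (covnum (r/2) (ball i R \<inter> X)) \<le> C\<^sub>2 * (R / (r/2)) powr \<alpha>\<^sub>2"
    using assms by (intro assouad[unfolded assouad_growth_def, rule_format]) auto
  moreover have "card {j\<in>S. dist i j < R} \<le> covnum (r/2) (ball i R \<inter> X)"
    using assms bounded_X by (intro card_ball_le_covnum) auto
  ultimately show ?thesis by (simp add: mult.commute)
qed

text \<open>Cover X by finitely many balls of radius 3/4 and apply the spectrum bound in each.\<close>
lemma obtain_packing_bound:
  obtains c where "0 \<le> c"
    "\<And>r S. 0 < r \<Longrightarrow> r/2 \<le> (3/4) powr (1/\<theta>) \<Longrightarrow> r/2 < diameter (UNIV::'a set) \<Longrightarrow>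
       S \<subseteq> X \<Longrightarrow> finite S \<Longrightarrow> separated (r/2) S \<Longrightarrow> real (card S) \<le> c * r powr - \<alpha>\<^sub>1"
proof -
  obtain F where F: "F \<subseteq> X" "finite F" "separated (1/2) F" "\<And>x. x \<in> X \<Longrightarrow> \<exists>f\<in>F. dist x f \<le> 1/2"
    by (rule obtain_separated_net[OF bounded_X, of "1/2"]) auto
  show ?thesis
  proof (rule that[of "card F * C\<^sub>1 * 2 powr \<alpha>\<^sub>1"])
    show "0 \<le> card F * C\<^sub>1 * 2 powr \<alpha>\<^sub>1" using C\<^sub>1_pos by simp
    fix r S assume r: "0 < r" "r/2 \<le> (3/4) powr (1/\<theta>)" "r/2 < diameter (UNIV::'a set)"
      and S: "S \<subseteq> X" "finite S" "separated (r/2) S"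
    have cover: "S \<subseteq> (\<Union>f\<in>F. {j\<in>S. dist f j < 3/4})"
    proof
      fix j assume "j \<in> S"
      then obtain f where "f \<in> F" "dist j f \<le> 1/2" using F(4) S(1) by blast
      with \<open>j \<in> S\<close> show "j \<in> (\<Union>f\<in>F. {j\<in>S. dist f j < 3/4})"
        by (intro UN_I[of f]) (auto simp: dist_commute)
    qed
    have "card S \<le> card (\<Union>f\<in>F. {j\<in>S. dist f j < 3/4})"
      using cover F(2) S(2) by (intro card_mono) auto
    also have "\<dots> \<le> (\<Sum>f\<in>F. card {j\<in>S. dist f j < 3/4})"
      using F(2) by (rule card_UN_le)
    finally have "real (card S) \<le> (\<Sum>f\<in>F. real (card {j\<in>S. dist f j < 3/4}))"
      by (simp only: of_nat_sum[symmetric] of_nat_le_iff)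
    also have "\<dots> \<le> (\<Sum>f\<in>F. C\<^sub>1 * (2 / r) powr \<alpha>\<^sub>1)"
    proof (rule sum_mono)
      fix f assume "f \<in> F"
      then have "real (card {j\<in>S. dist f j < 3/4}) \<le> C\<^sub>1 * (2 * (3/4) / r) powr \<alpha>\<^sub>1"
        using F(1) S r by (intro card_ball_le_spectral) auto
      also have "\<dots> \<le> C\<^sub>1 * (2 / r) powr \<alpha>\<^sub>1"
        using r C\<^sub>1_pos s_pos s_less_\<alpha>\<^sub>1 by (intro mult_left_mono powr_mono2) (auto simp: field_simps)
      finally show "real (card {j\<in>S. dist f j < 3/4}) \<le> C\<^sub>1 * (2 / r) powr \<alpha>\<^sub>1" .
    qed
    also have "\<dots> = card F * C\<^sub>1 * 2 powr \<alpha>\<^sub>1 * r powr - \<alpha>\<^sub>1"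
      using r by (simp add: powr_divide powr_minus_divide)
    finally show "real (card S) \<le> card F * C\<^sub>1 * 2 powr \<alpha>\<^sub>1 * r powr - \<alpha>\<^sub>1" .
  qed
qed

lemma spectral_scales_sum:
  assumes S: "S \<subseteq> X" "finite S" "separated (r/2) S" "i \<in> S"
    and r: "0 < r" "r/2 < diameter (UNIV::'a set)"
    and A: "finite A" "\<And>k. k \<in> A \<Longrightarrow> 2^k * r < 1 \<and> r/2 \<le> (2^k * r) powr (1/\<theta>)"
  shows "(\<Sum>k\<in>A. (2 powr - s) ^ k * real (card {j\<in>S. dist i j < 2^k * r}))
           \<le> C\<^sub>1 * 2 powr \<alpha>\<^sub>1 * (2 powr (\<alpha>\<^sub>1 - s) / (2 powr (\<alpha>\<^sub>1 - s) - 1)) * r powr - (\<alpha>\<^sub>1 - s)"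
proof -
  have "(\<Sum>k\<in>A. (2 powr - s) ^ k * real (card {j\<in>S. dist i j < 2^k * r}))
      \<le> (\<Sum>k\<in>A. C\<^sub>1 * 2 powr \<alpha>\<^sub>1 * (2 powr (\<alpha>\<^sub>1 - s)) ^ k)"
  proof (rule sum_mono)
    fix k assume "k \<in> A"
    then have "real (card {j\<in>S. dist i j < 2^k * r}) \<le> C\<^sub>1 * (2 * (2^k * r) / r) powr \<alpha>\<^sub>1"
      using S r A(2) by (intro card_ball_le_spectral) auto
    then have "(2 powr - s) ^ k * real (card {j\<in>S. dist i j < 2^k * r})
        \<le> (2 powr - s) ^ k * (C\<^sub>1 * (2 * (2^k * r) / r) powr \<alpha>\<^sub>1)"
      by (rule mult_left_mono) simp
    also have "\<dots> = C\<^sub>1 * 2 powr \<alpha>\<^sub>1 * (2 powr (\<alpha>\<^sub>1 - s)) ^ k"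
      using dyadic_weight[OF r(1), of s k "\<alpha>\<^sub>1"] by (metis mult.assoc mult.left_commute)
    finally show "(2 powr - s) ^ k * real (card {j\<in>S. dist i j < 2^k * r}) \<le> C\<^sub>1 * 2 powr \<alpha>\<^sub>1 * (2 powr (\<alpha>\<^sub>1 - s)) ^ k" .
  qed
  also have "\<dots> \<le> C\<^sub>1 * 2 powr \<alpha>\<^sub>1 * (2 powr (\<alpha>\<^sub>1 - s) / (2 powr (\<alpha>\<^sub>1 - s) - 1) * r powr - (\<alpha>\<^sub>1 - s))"
    unfolding sum_distrib_left[symmetric]
  proof (intro mult_left_mono geometric_sum_le_gt_1)
    fix k assume "k \<in> A"
    then have "2 ^ k \<le> 1 / r" using A(2) r by (simp add: field_simps less_imp_le)
    then show "(2 powr (\<alpha>\<^sub>1 - s)) ^ k \<le> r powr - (\<alpha>\<^sub>1 - s)"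
      using power_two_powr_le[of "\<alpha>\<^sub>1 - s" k "1/r"] s_less_\<alpha>\<^sub>1 r
      by (simp add: powr_divide powr_minus_divide del: minus_diff_eq)
  qed (use A(1) s_less_\<alpha>\<^sub>1 C\<^sub>1_pos in auto)
  finally show ?thesis by (simp add: mult.assoc)
qed

lemma assouad_scales_sum:
  assumes S: "S \<subseteq> X" "finite S" "separated (r/2) S" "i \<in> S"
    and r: "0 < r" "r/2 < diameter (UNIV::'a set)"
    and A: "finite A" "\<And>k. k \<in> A \<Longrightarrow> (2^k * r) powr (1/\<theta>) < r/2"
  shows "(\<Sum>k\<in>A. (2 powr - s) ^ k * real (card {j\<in>S. dist i j < 2^k * r}))
           \<le> C\<^sub>2 * 2 powr \<alpha>\<^sub>2 * (2 powr (\<alpha>\<^sub>2 - s) / (2 powr (\<alpha>\<^sub>2 - s) - 1)) * r powr ((\<theta> - 1) * (\<alpha>\<^sub>2 - s))"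
proof -
  have "(\<Sum>k\<in>A. (2 powr - s) ^ k * real (card {j\<in>S. dist i j < 2^k * r}))
      \<le> (\<Sum>k\<in>A. C\<^sub>2 * 2 powr \<alpha>\<^sub>2 * (2 powr (\<alpha>\<^sub>2 - s)) ^ k)"
  proof (rule sum_mono)
    fix k :: nat
    have "1 * r \<le> 2^k * r" using r by (intro mult_right_mono) auto
    then have "r/2 < 2^k * r" using r by linarith
    then have "real (card {j\<in>S. dist i j < 2^k * r}) \<le> C\<^sub>2 * (2 * (2^k * r) / r) powr \<alpha>\<^sub>2"
      using S r by (intro card_ball_le_assouad) auto
    then have "(2 powr - s) ^ k * real (card {j\<in>S. dist i j < 2^k * r})
        \<le> (2 powr - s) ^ k * (C\<^sub>2 * (2 * (2^k * r) / r) powr \<alpha>\<^sub>2)"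
      by (rule mult_left_mono) simp
    also have "\<dots> = C\<^sub>2 * 2 powr \<alpha>\<^sub>2 * (2 powr (\<alpha>\<^sub>2 - s)) ^ k"
      using dyadic_weight[OF r(1), of s k "\<alpha>\<^sub>2"] by (metis mult.assoc mult.left_commute)
    finally show "(2 powr - s) ^ k * real (card {j\<in>S. dist i j < 2^k * r}) \<le> C\<^sub>2 * 2 powr \<alpha>\<^sub>2 * (2 powr (\<alpha>\<^sub>2 - s)) ^ k" .
  qed
  also have "\<dots> \<le> C\<^sub>2 * 2 powr \<alpha>\<^sub>2 * (2 powr (\<alpha>\<^sub>2 - s) / (2 powr (\<alpha>\<^sub>2 - s) - 1) * r powr ((\<theta> - 1) * (\<alpha>\<^sub>2 - s)))"
    unfolding sum_distrib_left[symmetric]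
  proof (intro mult_left_mono geometric_sum_le_gt_1)
    fix k assume "k \<in> A"
    then have "2^k * r < (r/2) powr \<theta>"
      using A(2) r \<theta>_pos by (intro less_powr_of_powr_inverse_less) auto
    also have "\<dots> \<le> r powr \<theta>" using r \<theta>_pos by (intro powr_mono2) auto
    finally have "2 ^ k \<le> r powr (\<theta> - 1)"
      using r by (simp add: powr_diff field_simps)
    then show "(2 powr (\<alpha>\<^sub>2 - s)) ^ k \<le> r powr ((\<theta> - 1) * (\<alpha>\<^sub>2 - s))"
      using power_two_powr_le[of "\<alpha>\<^sub>2 - s" k "r powr (\<theta> - 1)"] s_less_\<alpha>\<^sub>2 by (simp add: powr_powr)
  qed (use A(1) s_less_\<alpha>\<^sub>2 C\<^sub>2_pos in auto)
  finally show ?thesis by (simp add: mult.assoc)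
qed

lemma large_scales_sum:
  assumes S: "finite S" and r: "0 < r"
    and A: "finite A" "\<And>k. k \<in> A \<Longrightarrow> 1 \<le> 2^k * r"
  shows "(\<Sum>k\<in>A. (2 powr - s) ^ k * real (card {j\<in>S. dist i j < 2^k * r}))
           \<le> real (card S) * (r powr s / (1 - 2 powr - s))"
proof -
  have "(\<Sum>k\<in>A. (2 powr - s) ^ k * real (card {j\<in>S. dist i j < 2^k * r}))
      \<le> (\<Sum>k\<in>A. real (card S) * (2 powr - s) ^ k)"
    using S by (intro sum_mono) (simp add: card_mono mult.commute mult_right_mono)
  also have "\<dots> \<le> real (card S) * (r powr s / (1 - 2 powr - s))"
    unfolding sum_distrib_left[symmetric]
  proof (intro mult_left_mono geometric_sum_le_lt_1)
    fix k assume "k \<in> A"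
    then have "1 / r \<le> 2 ^ k" using A(2) r by (simp add: field_simps)
    then show "(2 powr - s) ^ k \<le> r powr s"
      using power_two_powr_le_neg[of "- s" "1/r" k] s_pos r by (simp add: powr_divide powr_minus_divide)
  qed (use A(1) s_pos in \<open>auto simp: powr_minus_divide\<close>)
  finally show ?thesis .
qed

lemma row_sum_le:
  assumes S: "S \<subseteq> X" "finite S" "separated (r/2) S" "i \<in> S"
    and r: "0 < r" "r/2 < diameter (UNIV::'a set)"
  shows "(\<Sum>j\<in>S. phi_kernel s r (i - j)) \<le> 2 powr s *
           (C\<^sub>1 * 2 powr \<alpha>\<^sub>1 * (2 powr (\<alpha>\<^sub>1 - s) / (2 powr (\<alpha>\<^sub>1 - s) - 1)) * r powr - (\<alpha>\<^sub>1 - s)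
          + C\<^sub>2 * 2 powr \<alpha>\<^sub>2 * (2 powr (\<alpha>\<^sub>2 - s) / (2 powr (\<alpha>\<^sub>2 - s) - 1)) * r powr ((\<theta> - 1) * (\<alpha>\<^sub>2 - s))
          + real (card S) * (r powr s / (1 - 2 powr - s)))"
proof -
  let ?n = "\<lambda>k. (2 powr - s) ^ k * real (card {j\<in>S. dist i j < 2^k * r})"
  define small where "small = {k. 2^k * r < 1}"
  define spec where "spec = {k. r/2 \<le> (2^k * r) powr (1/\<theta>)}"
  obtain K :: nat where K: "diameter S / r < 2^K" using real_arch_pow[of 2 "diameter S / r"] by auto
  have "dist i j < 2^K * r" if "j \<in> S" for j
  proof -
    have "dist i j \<le> diameter S"
      using that S by (intro diameter_bounded_bound) (auto intro: finite_imp_bounded)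
    also have "\<dots> < 2^K * r" using K r by (simp add: field_simps)
    finally show ?thesis .
  qed
  then have "(\<Sum>j\<in>S. phi_kernel s r (i - j)) \<le> 2 powr s * sum ?n {..K}"
    using S r s_pos by (intro sum_phi_kernel_le_dyadic) auto
  also have "sum ?n {..K} = sum ?n ({..K} \<inter> small \<inter> spec) + sum ?n ({..K} \<inter> small - spec) + sum ?n ({..K} - small)"
    by (simp add: sum.Int_Diff[of "{..K}" _ small] sum.Int_Diff[of "{..K} \<inter> small" _ spec])
  also have "\<dots> \<le> C\<^sub>1 * 2 powr \<alpha>\<^sub>1 * (2 powr (\<alpha>\<^sub>1 - s) / (2 powr (\<alpha>\<^sub>1 - s) - 1)) * r powr - (\<alpha>\<^sub>1 - s)
          + C\<^sub>2 * 2 powr \<alpha>\<^sub>2 * (2 powr (\<alpha>\<^sub>2 - s) / (2 powr (\<alpha>\<^sub>2 - s) - 1)) * r powr ((\<theta> - 1) * (\<alpha>\<^sub>2 - s))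
          + real (card S) * (r powr s / (1 - 2 powr - s))"
    using S r
    by (intro add_mono spectral_scales_sum assouad_scales_sum large_scales_sum)
       (auto simp: small_def spec_def not_less)
  finally show ?thesis using s_pos by (simp add: mult_left_mono)
qed

definition exponent_loss :: real where
  "exponent_loss = max (\<alpha>\<^sub>1 - s) ((\<alpha>\<^sub>2 - s) * (1 - \<theta>))"

definition row_const :: "real \<Rightarrow> real" where
  "row_const c = 2 powr s *
     (C\<^sub>1 * 2 powr \<alpha>\<^sub>1 * (2 powr (\<alpha>\<^sub>1 - s) / (2 powr (\<alpha>\<^sub>1 - s) - 1))
    + C\<^sub>2 * 2 powr \<alpha>\<^sub>2 * (2 powr (\<alpha>\<^sub>2 - s) / (2 powr (\<alpha>\<^sub>2 - s) - 1))
    + c / (1 - 2 powr - s))"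

lemma row_const_pos:
  assumes "0 \<le> c"
  shows "0 < row_const c"
proof -
  have "0 < C\<^sub>1 * 2 powr \<alpha>\<^sub>1 * (2 powr (\<alpha>\<^sub>1 - s) / (2 powr (\<alpha>\<^sub>1 - s) - 1))"
    "0 < C\<^sub>2 * 2 powr \<alpha>\<^sub>2 * (2 powr (\<alpha>\<^sub>2 - s) / (2 powr (\<alpha>\<^sub>2 - s) - 1))"
    using C\<^sub>1_pos C\<^sub>2_pos s_less_\<alpha>\<^sub>1 s_less_\<alpha>\<^sub>2 by simp_all
  moreover have "2 powr - s < 1" using s_pos by (auto simp: powr_minus_divide)
  then have "0 \<le> c / (1 - 2 powr - s)" using assms by simp
  ultimately show ?thesis by (simp add: row_const_def)
qed

lemma row_sum_le_power:
  assumes S: "S \<subseteq> X" "finite S" "separated (r/2) S" "i \<in> S"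
    and r: "0 < r" "r \<le> 1" "r/2 < diameter (UNIV::'a set)"
    and c: "0 \<le> c" and card_S: "real (card S) \<le> c * r powr - \<alpha>\<^sub>1"
  shows "(\<Sum>j\<in>S. phi_kernel s r (i - j)) \<le> row_const c * r powr - exponent_loss"
proof -
  define M where "M = exponent_loss"
  define A\<^sub>1 where "A\<^sub>1 = C\<^sub>1 * 2 powr \<alpha>\<^sub>1 * (2 powr (\<alpha>\<^sub>1 - s) / (2 powr (\<alpha>\<^sub>1 - s) - 1))"
  define A\<^sub>2 where "A\<^sub>2 = C\<^sub>2 * 2 powr \<alpha>\<^sub>2 * (2 powr (\<alpha>\<^sub>2 - s) / (2 powr (\<alpha>\<^sub>2 - s) - 1))"
  define t where "t = 2 powr - s"
  have t: "0 < 1 - t" using s_pos by (simp add: t_def powr_minus_divide)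
  have A: "0 \<le> A\<^sub>1" "0 \<le> A\<^sub>2"
    using C\<^sub>1_pos C\<^sub>2_pos s_less_\<alpha>\<^sub>1 s_less_\<alpha>\<^sub>2 by (auto simp: A\<^sub>1_def A\<^sub>2_def less_imp_le)
  have r_le: "r powr x \<le> r powr - M" if "- M \<le> x" for x
    using that r by (intro powr_mono') auto
  have "(\<Sum>j\<in>S. phi_kernel s r (i - j))
      \<le> 2 powr s * (A\<^sub>1 * r powr - (\<alpha>\<^sub>1 - s) + A\<^sub>2 * r powr ((\<theta> - 1) * (\<alpha>\<^sub>2 - s))
          + real (card S) * (r powr s / (1 - t)))"
    unfolding A\<^sub>1_def A\<^sub>2_def t_def using S r by (intro row_sum_le) auto
  also have "\<dots> \<le> 2 powr s * (A\<^sub>1 * r powr - M + A\<^sub>2 * r powr - M + c / (1 - t) * r powr - M)"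
  proof (rule mult_left_mono, intro add_mono)
    show "A\<^sub>1 * r powr - (\<alpha>\<^sub>1 - s) \<le> A\<^sub>1 * r powr - M"
      using A by (intro mult_left_mono r_le) (auto simp: M_def exponent_loss_def)
    show "A\<^sub>2 * r powr ((\<theta> - 1) * (\<alpha>\<^sub>2 - s)) \<le> A\<^sub>2 * r powr - M"
      using A by (intro mult_left_mono r_le) (auto simp: M_def exponent_loss_def algebra_simps)
    have "real (card S) * (r powr s / (1 - t)) \<le> c * r powr - \<alpha>\<^sub>1 * (r powr s / (1 - t))"
      using card_S t by (intro mult_right_mono) auto
    also have "\<dots> = c / (1 - t) * r powr (s - \<alpha>\<^sub>1)"
      by (simp add: powr_add[symmetric])
    also have "\<dots> \<le> c / (1 - t) * r powr - M"
      using c t by (intro mult_left_mono r_le) (auto simp: M_def exponent_loss_def)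
    finally show "real (card S) * (r powr s / (1 - t)) \<le> c / (1 - t) * r powr - M" .
  qed simp
  finally show ?thesis by (simp add: M_def A\<^sub>1_def A\<^sub>2_def t_def row_const_def algebra_simps)
qed

lemma capacity_ge_at_scale:
  assumes c: "0 \<le> c"
    and packing: "\<And>S. S \<subseteq> X \<Longrightarrow> finite S \<Longrightarrow> separated (r/2) S \<Longrightarrow> real (card S) \<le> c * r powr - \<alpha>\<^sub>1"
    and r: "0 < r" "r \<le> 1" "r/2 < diameter (UNIV::'a set)"
  shows "real (covnum r X) * r powr exponent_loss / row_const c \<le> capacity s r X"
proof -
  define K where "K = row_const c"
  define M where "M = exponent_loss"
  have K: "0 < K" unfolding K_def using c by (rule row_const_pos)
  obtain S where S: "S \<subseteq> X" "finite S" "separated (r/2) S"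
    "\<And>x. x \<in> X \<Longrightarrow> \<exists>y\<in>S. dist x y \<le> r/2" "covnum r X \<le> card S"
    by (rule obtain_separated_net_covnum[OF bounded_X r(1)]) blast
  have "S \<noteq> {}" using S(4) X_nonempty by blast
  then have N: "0 < real (card S)" using S(2) by (simp add: card_gt_0_iff)
  have "(\<Sum>j\<in>S. phi_kernel s r (i - j)) \<le> K * r powr - M" if "i \<in> S" for i
    unfolding K_def M_def using S r c that by (intro row_sum_le_power packing) auto
  then have "(\<Sum>i\<in>S. \<Sum>j\<in>S. phi_kernel s r (i - j)) \<le> real (card S) * (K * r powr - M)"
    by (rule sum_bounded_above)
  then have "(real (card S))^2 / (real (card S) * (K * r powr - M)) \<le> capacity s r X"
    using S \<open>S \<noteq> {}\<close> r s_pos by (intro capacity_ge_discrete[OF bounded_X]) auto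
  moreover have "(real (card S))^2 / (real (card S) * (K * r powr - M)) = real (card S) * r powr M / K"
    using N K r by (simp add: power2_eq_square powr_minus field_simps)
  moreover have "real (covnum r X) * r powr M / K \<le> real (card S) * r powr M / K"
    using S(5) K by (intro divide_right_mono mult_right_mono) auto
  ultimately show ?thesis unfolding K_def M_def by linarith
qed

lemma eventually_capacity_ge:
  obtains K where "0 < K"
    "eventually (\<lambda>r. real (covnum r X) * r powr exponent_loss / K \<le> capacity s r X) (at_right 0)"
proof -
  obtain c where c: "0 \<le> c" and packing: "\<And>r S. 0 < r \<Longrightarrow> r/2 \<le> (3/4) powr (1/\<theta>) \<Longrightarrow>
      r/2 < diameter (UNIV::'a set) \<Longrightarrow> S \<subseteq> X \<Longrightarrow> finite S \<Longrightarrow> separated (r/2) S \<Longrightarrow>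
      real (card S) \<le> c * r powr - \<alpha>\<^sub>1"
    by (rule obtain_packing_bound) blast
  define r\<^sub>0 where "r\<^sub>0 = min 1 (min (2 * (3/4) powr (1/\<theta>)) (2 * diameter (UNIV::'a set)))"
  have "0 < r\<^sub>0" using diameter_UNIV_pos by (simp add: r\<^sub>0_def)
  moreover have "real (covnum r X) * r powr exponent_loss / row_const c \<le> capacity s r X"
    if "0 < r" "r < r\<^sub>0" for r
    using that by (intro capacity_ge_at_scale c packing) (auto simp: r\<^sub>0_def)
  ultimately have "eventually (\<lambda>r. real (covnum r X) * r powr exponent_loss / row_const c
      \<le> capacity s r X) (at_right 0)"
    unfolding eventually_at_right_field by blast
  with row_const_pos[OF c] show ?thesis by (rule that)
qed

lemma upper_box_dim_profile_ge: "upper_box_dim X - ereal exponent_loss \<le> upper_box_dim_profile s X"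
proof -
  obtain K where K: "0 < K"
    "eventually (\<lambda>r. real (covnum r X) * r powr exponent_loss / K \<le> capacity s r X) (at_right 0)"
    by (rule eventually_capacity_ge)
  have "eventually (\<lambda>r. 1 \<le> real (covnum r X)) (at_right 0)"
    unfolding eventually_at_right_field
    using covnum_pos[OF bounded_X _ X_nonempty] by (intro exI[of _ 1]) (auto simp: Suc_le_eq)
  with K(2) show ?thesis
    unfolding upper_box_dim_def upper_box_dim_profile_def
    by (intro Limsup_log_ratio_ge[OF K(1)]) (rule eventually_conj)
qed

end

section \<open>From growth exponents to dimensions\<close>

lemma upper_box_dim_profile_nonneg:
  fixes X :: "'a::euclidean_space set"
  assumes "bounded X" "X \<noteq> {}" "0 \<le> s"
  shows "0 \<le> upper_box_dim_profile s X"
  unfolding upper_box_dim_profile_def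
proof (rule le_Limsup)
  obtain x where "x \<in> X" using assms(2) by blast
  have "0 \<le> ereal (ln (capacity s r X) / - ln r)" if "0 < r" "r < 1" for r
  proof -
    have "1 \<le> capacity s r X"
      using capacity_ge_discrete[OF assms(1) that(1) assms(3), of "{x}" 1] \<open>x \<in> X\<close>
      by (simp add: phi_kernel_def)
    moreover have "0 < - ln r" using that by simp
    ultimately show ?thesis by (simp add: divide_nonneg_neg)
  qed
  then show "eventually (\<lambda>r. 0 \<le> ereal (ln (capacity s r X) / - ln r)) (at_right 0)"
    unfolding eventually_at_right_field by (intro exI[of _ 1]) auto
qed simp

text \<open>The diameter of UNIV is a junk value. If it is not positive, UNIV itself is an admissible
  set in every cover, so all covering numbers are at most 1.\<close>
lemma upper_box_dim_nonpos_if_diameter_UNIV_nonpos: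
  fixes X :: "'a::euclidean_space set"
  assumes "diameter (UNIV :: 'a set) \<le> 0"
  shows "upper_box_dim X \<le> 0"
  unfolding upper_box_dim_def
proof (rule Limsup_bounded)
  have "ereal (ln (real (covnum r X)) / - ln r) \<le> 0" if "0 < r" "r < 1" for r
  proof -
    have "covnum r X \<le> 1"
      using covnum_le_card[of "{UNIV}" X r] assms that by simp
    then have "ln (real (covnum r X)) \<le> 0"
      by (cases "covnum r X = 0") auto
    moreover have "0 < - ln r" using that by simp
    ultimately show ?thesis by (simp add: divide_nonpos_neg)
  qed
  then show "eventually (\<lambda>r. ereal (ln (real (covnum r X)) / - ln r) \<le> 0) (at_right 0)"
    unfolding eventually_at_right_field by (intro exI[of _ 1]) auto
qed

lemma upper_box_dim_profile_ge_if_diameter_UNIV_nonpos: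
  fixes X :: "'a::euclidean_space set"
  assumes "bounded X" "X \<noteq> {}" "0 \<le> s" "0 \<le> m" "diameter (UNIV :: 'a set) \<le> 0"
  shows "upper_box_dim X - ereal m \<le> upper_box_dim_profile s X"
proof -
  have "upper_box_dim X - ereal m \<le> 0"
    using upper_box_dim_nonpos_if_diameter_UNIV_nonpos[of X, OF assms(5)] assms(4)
    by (cases "upper_box_dim X") auto
  also have "0 \<le> upper_box_dim_profile s X"
    by (rule upper_box_dim_profile_nonneg[OF assms(1-3)])
  finally show ?thesis .
qed

lemma growth_loss_le:
  fixes \<alpha>\<^sub>1 \<alpha>\<^sub>2 a b s e \<theta> :: real
  assumes "\<alpha>\<^sub>1 < a + e" "\<alpha>\<^sub>2 < b + e" "0 < e" "0 < \<theta>" "\<theta> < 1"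
  shows "max (max \<alpha>\<^sub>1 (s + e) - s) ((max \<alpha>\<^sub>2 (s + e) - s) * (1 - \<theta>))
           \<le> max 0 (max (a - s) ((b - s) * (1 - \<theta>))) + e"
proof -
  have "(max \<alpha>\<^sub>2 (s + e) - s) * (1 - \<theta>) \<le> (max 0 (b - s) + e) * (1 - \<theta>)"
    using assms by (intro mult_right_mono) auto
  also have "\<dots> = max 0 ((b - s) * (1 - \<theta>)) + e * (1 - \<theta>)"
    using assms by (simp add: distrib_right max_mult_distrib_right)
  also have "\<dots> \<le> max 0 ((b - s) * (1 - \<theta>)) + e"
    using assms by (simp add: mult_left_le)
  finally show ?thesis using assms(1) by auto
qed

lemma upper_box_dim_profile_ge_finite:
  fixes X :: "'a::euclidean_space set"
  assumes "bounded X" "X \<noteq> {}" "0 < s" "0 < \<theta>" "\<theta> < 1" "0 < diameter (UNIV :: 'a set)"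
    and a: "upper_assouad_spectrum \<theta> X = ereal a" and b: "assouad_dim X = ereal b"
  shows "upper_box_dim X - ereal (max 0 (max (a - s) ((b - s) * (1 - \<theta>)))) \<le> upper_box_dim_profile s X"
proof (rule ereal_diff_le_epsilon)
  fix e :: real assume e: "0 < e"
  obtain \<alpha>\<^sub>1 C\<^sub>1 where \<alpha>\<^sub>1: "\<alpha>\<^sub>1 < a + e" "0 < C\<^sub>1" "spectral_growth \<theta> X C\<^sub>1 \<alpha>\<^sub>1"
    using obtain_spectral_growth[of \<theta> X "a + e"] a e by auto
  obtain \<alpha>\<^sub>2 C\<^sub>2 where \<alpha>\<^sub>2: "\<alpha>\<^sub>2 < b + e" "0 < C\<^sub>2" "assouad_growth X C\<^sub>2 \<alpha>\<^sub>2"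
    using obtain_assouad_growth[of X "b + e"] b e by auto
  interpret growth_exponents X s \<theta> "max \<alpha>\<^sub>1 (s + e)" C\<^sub>1 "max \<alpha>\<^sub>2 (s + e)" C\<^sub>2
    using assms \<alpha>\<^sub>1 \<alpha>\<^sub>2 e by unfold_locales (auto intro: spectral_growth_mono assouad_growth_mono)
  have "upper_box_dim X - ereal (max 0 (max (a - s) ((b - s) * (1 - \<theta>))) + e)
      \<le> upper_box_dim X - ereal (max (max \<alpha>\<^sub>1 (s + e) - s) ((max \<alpha>\<^sub>2 (s + e) - s) * (1 - \<theta>)))"
    using growth_loss_le[OF \<alpha>\<^sub>1(1) \<alpha>\<^sub>2(1) e assms(4,5)] by (intro ereal_minus_mono) auto
  also have "\<dots> \<le> upper_box_dim_profile s X"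
    using upper_box_dim_profile_ge by (simp add: exponent_loss_def)
  finally show "upper_box_dim X - ereal (max 0 (max (a - s) ((b - s) * (1 - \<theta>))) + e)
      \<le> upper_box_dim_profile s X" .
qed

theorem theorem4p3:
  fixes X :: "(real ^ 'n) set" and s \<theta> :: real
  assumes "0 < s" "s \<le> real CARD('n)" "0 < \<theta>" "\<theta> < 1"
    and "bounded X" "X \<noteq> {}"
  shows "upper_box_dim_profile s X \<ge> upper_box_dim X -
           max 0 (max (upper_assouad_spectrum \<theta> X - ereal s)
                      ((assouad_dim X - ereal s) * ereal (1 - \<theta>)))"
proof -
  obtain a where a: "upper_assouad_spectrum \<theta> X = ereal a"
    using upper_assouad_spectrum_nonneg[of \<theta> X] upper_assouad_spectrum_le_DIM[of \<theta> X]
    by (cases "upper_assouad_spectrum \<theta> X") auto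
  obtain b where b: "assouad_dim X = ereal b"
    using assouad_dim_nonneg[of X] assouad_dim_le_DIM[of X] by (cases "assouad_dim X") auto
  define m where "m = max 0 (max (a - s) ((b - s) * (1 - \<theta>)))"
  have "max 0 (max (upper_assouad_spectrum \<theta> X - ereal s) ((assouad_dim X - ereal s) * ereal (1 - \<theta>)))
      = ereal m"
    unfolding a b m_def by (simp add: max_def)
  moreover have "upper_box_dim X - ereal m \<le> upper_box_dim_profile s X"
  proof (cases "0 < diameter (UNIV :: (real ^ 'n) set)")
    case True
    then show ?thesis
      unfolding m_def using assms by (intro upper_box_dim_profile_ge_finite a b) auto
  next
    case False
    then show ?thesis
      using assms by (intro upper_box_dim_profile_ge_if_diameter_UNIV_nonpos) (auto simp: m_def)
  qed
  ultimately show ?thesis by simp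
qed

end
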